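(* Let $\mathscr{C}$ be an $(n,M,\mathcal{X},\epsilon,B,\delta)$-code for the complex AWGN channel with noise variance $\sigma^2$ belonging to the family $\mathsf{C}(C,\boldsymbol{A},\boldsymbol{L},\boldsymbol{\alpha},\boldsymbol{p},\boldsymbol{r})$ described below, with $r_c=r$ for all $c\in\{1,\dots,C\}$. Then \[ r\ge\sqrt{\sigma^2\ln\left(\frac{1}{1-(1-\epsilon)^{1/n}}\right)}. \]
   Context: Here $\ln$ is the natural logarithm. Channel: $f_{\boldsymbol{Y}|\boldsymbol{X}}(\boldsymbol{y}|\boldsymbol{\nu})=\prod_{m=1}^n \frac{1}{\pi\sigma^2}\exp(-|y_m-\nu_m|^2/\sigma^2)$. An $(n,M,\mathcal{X})$-code is $\{(\boldsymbol{u}(i),\mathcal{D}_i)\}_{i=1}^M$ with $\boldsymbol{u}(i)\in\mathcal{X}^n$ and pairwise disjoint $\mathcal{D}_i\subseteq\mathbb{C}^n$; $\gamma(\mathscr{C})=\frac1M\sum_i\big(1-\int_{\mathcal{D}_i}f_{\boldsymbol{Y}|\boldsymbol{X}}(\boldsymbol{y}|\boldsymbol{u}(i))\mathrm{d}\boldsymbol{y}\big)$; $e_i=k_1\sum_m|u_m(i)|^2+k_2\sum_m|u_m(i)|^4$ with positive constants $k_1,k_2$; $\theta(\mathscr{C},B)=\frac1M\sum_i\mathbb{1}_{\{e_i<B\}}$; an $(n,M,\mathcal{X},\epsilon,B,\delta)$-code is one with $\gamma(\mathscr{C})\le\epsilon$, $\theta(\mathscr{C},B)\le\delta$. Type $P_{\mathscr{C}}(x)=\frac1{Mn}\sum_{i,m}\mathbb{1}_{\{u_m(i)=x\}}$.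 Family $\mathsf{C}(C,\boldsymbol{A},\boldsymbol{L},\boldsymbol{\alpha},\boldsymbol{p},\boldsymbol{r})$: amplitudes $A_1>\dots>A_C>0$; $L_c\in\mathbb{N}$; phases $\alpha_c$; layer $c$ is $\{x_c^{(1)},\dots,x_c^{(L_c)}\}=\{A_c\exp(\mathrm{i}(2\pi\ell/L_c+\alpha_c)):\ell=0,\dots,L_c-1\}$; $\mathcal{X}$ is the union of the layers. Codewords are pairwise distinct with $P_{\mathscr{C}}(x_c^{(\ell)})=p_c/L_c$ for a probability vector $\boldsymbol{p}$. With radii $r_c>0$ and discs $\mathcal{G}_c^{(\ell)}=\{y:|y-x_c^{(\ell)}|\le r_c\}$, $\mathcal{D}_i=\prod_m\mathcal{D}_{i,m}$ with $\mathcal{D}_{i,m}=\mathcal{G}_c^{(\ell)}$ if $u_m(i)=x_c^{(\ell)}$; and $A_c-A_{c+1}\ge r_c+r_{c+1}$ for $c<C$. *)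

theory Defs
  imports "HOL-Probability.Probability"
begin

text \<open>Channel inputs/outputs of block length n are functions nat => complex,
  only the coordinates m < n being relevant; C^n carries the product Lebesgue measure.
  Codewords are indexed by i in {1..M}.\<close>

definition cn_measure :: "nat \<Rightarrow> (nat \<Rightarrow> complex) measure" where
  "cn_measure n = PiM {..<n} (\<lambda>_. lborel)"

definition awgn_density :: "real \<Rightarrow> nat \<Rightarrow> (nat \<Rightarrow> complex) \<Rightarrow> (nat \<Rightarrow> complex) \<Rightarrow> real" where
  "awgn_density \<sigma> n y \<nu> = (\<Prod>m<n. 1 / (pi * \<sigma>\<^sup>2) * exp (- (cmod (y m - \<nu> m))\<^sup>2 / \<sigma>\<^sup>2))"

definition is_code :: "nat \<Rightarrow> nat \<Rightarrow> complex set \<Rightarrow> (nat \<Rightarrow> nat \<Rightarrow> complex)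
    \<Rightarrow> (nat \<Rightarrow> (nat \<Rightarrow> complex) set) \<Rightarrow> bool" where
  "is_code n M X u D \<longleftrightarrow> M > 0 \<and> (\<forall>i\<in>{1..M}. \<forall>m<n. u i m \<in> X) \<and>
     (\<forall>i\<in>{1..M}. \<forall>j\<in>{1..M}. i \<noteq> j \<longrightarrow> D i \<inter> D j = {})"

definition avg_error :: "real \<Rightarrow> nat \<Rightarrow> nat \<Rightarrow> (nat \<Rightarrow> nat \<Rightarrow> complex)
    \<Rightarrow> (nat \<Rightarrow> (nat \<Rightarrow> complex) set) \<Rightarrow> real" where
  "avg_error \<sigma> n M u D = (1 / real M) * (\<Sum>i\<in>{1..M}.
      1 - (LINT y:D i|cn_measure n. awgn_density \<sigma> n y (u i)))"

definition energy :: "real \<Rightarrow> real \<Rightarrow> nat \<Rightarrow> (nat \<Rightarrow> complex) \<Rightarrow> real" where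
  "energy k1 k2 n w = k1 * (\<Sum>m<n. (cmod (w m))^2) + k2 * (\<Sum>m<n. (cmod (w m))^4)"

definition low_energy_frac :: "real \<Rightarrow> real \<Rightarrow> nat \<Rightarrow> nat \<Rightarrow> (nat \<Rightarrow> nat \<Rightarrow> complex) \<Rightarrow> real \<Rightarrow> real" where
  "low_energy_frac k1 k2 n M u B = (1 / real M) * (\<Sum>i\<in>{1..M}. if energy k1 k2 n (u i) < B then 1 else 0)"

definition is_code_full :: "real \<Rightarrow> real \<Rightarrow> real \<Rightarrow> nat \<Rightarrow> nat \<Rightarrow> complex set \<Rightarrow> real \<Rightarrow> real \<Rightarrow> real
    \<Rightarrow> (nat \<Rightarrow> nat \<Rightarrow> complex) \<Rightarrow> (nat \<Rightarrow> (nat \<Rightarrow> complex) set) \<Rightarrow> bool" where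
  "is_code_full \<sigma> k1 k2 n M X \<epsilon> B \<delta> u D \<longleftrightarrow> is_code n M X u D \<and>
     avg_error \<sigma> n M u D \<le> \<epsilon> \<and> low_energy_frac k1 k2 n M u B \<le> \<delta>"

definition code_type :: "nat \<Rightarrow> nat \<Rightarrow> (nat \<Rightarrow> nat \<Rightarrow> complex) \<Rightarrow> complex \<Rightarrow> real" where
  "code_type n M u x = (1 / (real M * real n)) * (\<Sum>i\<in>{1..M}. \<Sum>m<n. if u i m = x then 1 else 0)"

definition layer_point :: "(nat \<Rightarrow> real) \<Rightarrow> (nat \<Rightarrow> nat) \<Rightarrow> (nat \<Rightarrow> real) \<Rightarrow> nat \<Rightarrow> nat \<Rightarrow> complex" where
  "layer_point A L \<alpha> c l = complex_of_real (A c) * exp (\<i> * complex_of_real (2 * pi * real l / real (L c) + \<alpha> c))"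

definition constellation :: "nat \<Rightarrow> (nat \<Rightarrow> real) \<Rightarrow> (nat \<Rightarrow> nat) \<Rightarrow> (nat \<Rightarrow> real) \<Rightarrow> complex set" where
  "constellation C A L \<alpha> = (\<Union>c\<in>{1..C}. layer_point A L \<alpha> c ` {..<L c})"

definition in_family :: "nat \<Rightarrow> nat \<Rightarrow> (nat \<Rightarrow> nat \<Rightarrow> complex) \<Rightarrow> (nat \<Rightarrow> (nat \<Rightarrow> complex) set)
    \<Rightarrow> nat \<Rightarrow> (nat \<Rightarrow> real) \<Rightarrow> (nat \<Rightarrow> nat) \<Rightarrow> (nat \<Rightarrow> real) \<Rightarrow> (nat \<Rightarrow> real) \<Rightarrow> (nat \<Rightarrow> real) \<Rightarrow> bool" where
  "in_family n M u D C A L \<alpha> p r \<longleftrightarrow>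
     (\<forall>c\<in>{1..C}. A c > 0) \<and> (\<forall>c\<in>{1..<C}. A c > A (Suc c)) \<and>
     (\<forall>c\<in>{1..C}. L c \<ge> 1) \<and>
     (\<forall>c\<in>{1..C}. p c \<ge> 0) \<and> (\<Sum>c\<in>{1..C}. p c) = 1 \<and>
     (\<forall>c\<in>{1..C}. r c > 0) \<and> (\<forall>c\<in>{1..<C}. A c - A (Suc c) \<ge> r c + r (Suc c)) \<and>
     (\<forall>i\<in>{1..M}. \<forall>m<n. u i m \<in> constellation C A L \<alpha>) \<and>
     (\<forall>i\<in>{1..M}. \<forall>j\<in>{1..M}. i \<noteq> j \<longrightarrow> (\<exists>m<n. u i m \<noteq> u j m)) \<and>
     (\<forall>c\<in>{1..C}. \<forall>l<L c. code_type n M u (layer_point A L \<alpha> c l) = p c / real (L c)) \<and>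
     (\<forall>i\<in>{1..M}. D i = PiE {..<n} (\<lambda>m. {y. \<forall>c\<in>{1..C}. \<forall>l<L c.
         u i m = layer_point A L \<alpha> c l \<longrightarrow> cmod (y - layer_point A L \<alpha> c l) \<le> r c}))"

end

theory Submission
  imports Defs
begin

text \<open>Every decoding region of such a code lies in the product of the discs of radius \<open>r\<close>
  around the symbols of its codeword. Pushing Lebesgue measure on a disc of radius \<open>r\<close> forward
  along \<open>z \<mapsto> \<bar>z - \<nu>\<bar>\<^sup>2\<close> gives \<open>\<pi>\<close> times Lebesgue measure on \<open>[0, r\<^sup>2]\<close>, so the complex Gaussian
  puts mass \<open>1 - exp (-r\<^sup>2/\<sigma>\<^sup>2)\<close> on such a disc. Hence every codeword is decoded correctly with
  probability at most \<open>(1 - exp (-r\<^sup>2/\<sigma>\<^sup>2))\<^sup>n\<close>, so \<open>1 - \<epsilon> \<le> (1 - exp (-r\<^sup>2/\<sigma>\<^sup>2))\<^sup>n\<close>, and solving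
  for \<open>r\<close> gives the bound.\<close>

lemma emeasure_lborel_cball_complex:
  fixes \<nu> :: complex
  assumes "0 \<le> r"
  shows "emeasure lborel (cball \<nu> r) = ennreal (pi * r\<^sup>2)"
  using emeasure_cball[OF assms, of \<nu>] by (simp add: unit_ball_vol_2 power2_eq_square)

lemma emeasure_lborel_annulus_complex:
  fixes \<nu> :: complex
  assumes "0 \<le> s" and "s \<le> r"
  shows "emeasure lborel (cball \<nu> r - cball \<nu> s) = ennreal (pi * (r\<^sup>2 - s\<^sup>2))"
proof -
  have "emeasure lborel (cball \<nu> r - cball \<nu> s) = ennreal (pi * r\<^sup>2) - ennreal (pi * s\<^sup>2)"
    using assms by (subst emeasure_Diff) (auto simp: emeasure_lborel_cball_complex)
  also have "\<dots> = ennreal (pi * (r\<^sup>2 - s\<^sup>2))"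
    using assms by (simp add: ennreal_minus[symmetric] power_mono algebra_simps)
  finally show ?thesis .
qed

lemma cball_inter_dist_sq_greater:
  fixes \<nu> :: complex
  shows "cball \<nu> r \<inter> {z. x < (cmod (z - \<nu>))\<^sup>2} = cball \<nu> r - cball \<nu> (sqrt x)"
proof -
  have "x < t\<^sup>2 \<longleftrightarrow> sqrt x < t" if "0 \<le> t" for t :: real
    using that by (metis abs_of_nonneg real_sqrt_abs real_sqrt_less_iff)
  then show ?thesis
    by (auto simp: dist_norm norm_minus_commute)
qed

lemma distr_dist_sq_cball_complex:
  fixes \<nu> :: complex
  assumes r: "0 \<le> r"
  shows "distr (density lborel (indicator (cball \<nu> r))) borel (\<lambda>z. (cmod (z - \<nu>))\<^sup>2)
         = density lborel (\<lambda>s. ennreal pi * indicator {0..r\<^sup>2} s)" (is "?L = ?R")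
proof (rule measure_eqI_lessThan)
  show "sets ?L = sets borel" "sets ?R = sets borel" by auto
  have L: "emeasure ?L {x<..} = emeasure lborel (cball \<nu> r - cball \<nu> (sqrt x))" for x
  proof -
    have [measurable]: "cball \<nu> r \<in> sets borel"
      by (simp add: borel_closed)
    have "(\<lambda>z. (cmod (z - \<nu>))\<^sup>2) -` {x<..} \<in> sets borel"
      unfolding vimage_def greaterThan_iff
      by (intro borel_open open_Collect_less continuous_intros)
    then have "emeasure ?L {x<..} = emeasure lborel (cball \<nu> r \<inter> {z. x < (cmod (z - \<nu>))\<^sup>2})"
      by (simp add: emeasure_distr emeasure_restricted vimage_def)
    then show ?thesis
      by (simp add: cball_inter_dist_sq_greater)
  qed
  show "emeasure ?L {x<..} < \<infinity>" for x
    unfolding L by (intro le_less_trans[OF emeasure_mono emeasure_lborel_cball_finite]) auto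
  show "emeasure ?L {x<..} = emeasure ?R {x<..}" for x
  proof -
    have R: "emeasure ?R {x<..} = ennreal pi * emeasure lborel ({0..r\<^sup>2} \<inter> {x<..})"
    proof -
      have "emeasure ?R {x<..} = (\<integral>\<^sup>+s. ennreal pi * indicator ({0..r\<^sup>2} \<inter> {x<..}) s \<partial>lborel)"
        by (subst emeasure_density) (auto intro!: nn_integral_cong split: split_indicator)
      then show ?thesis
        by (simp add: nn_integral_cmult_indicator)
    qed
    consider "x < 0" | "0 \<le> x" "x \<le> r\<^sup>2" | "r\<^sup>2 < x" by linarith
    then show ?thesis
    proof cases
      case 1
      then have "{0..r\<^sup>2} \<inter> {x<..} = {0..r\<^sup>2}" "cball \<nu> (sqrt x) = {}" by auto
      then show ?thesis using r L R by (simp add: emeasure_lborel_cball_complex ennreal_mult')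
    next
      case 2
      then have "{0..r\<^sup>2} \<inter> {x<..} = {x<..r\<^sup>2}" by auto
      moreover have "sqrt x \<le> r" using 2 r real_sqrt_le_mono by fastforce
      ultimately show ?thesis
        using 2 L R by (simp add: emeasure_lborel_annulus_complex ennreal_mult')
    next
      case 3
      then have "{0..r\<^sup>2} \<inter> {x<..} = {}" by auto
      moreover have "r < sqrt x" using 3 r real_less_rsqrt by blast
      then have "cball \<nu> r - cball \<nu> (sqrt x) = {}" by auto
      ultimately show ?thesis unfolding L R by (simp only: emeasure_empty mult_zero_right)
    qed
  qed
qed

lemma has_integral_exp_neg_div:
  fixes a R :: real
  assumes "0 < a" and "0 \<le> R"
  shows "((\<lambda>s. exp (- s / a)) has_integral a * (1 - exp (- R / a))) {0..R}"
proof -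
  have "((\<lambda>s. - a * exp (- s / a)) has_real_derivative exp (- x / a)) (at x within {0..R})" for x
    using assms by (auto intro!: derivative_eq_intros)
  then have "((\<lambda>s. exp (- s / a)) has_integral - a * exp (- R / a) - - a * exp (- 0 / a)) {0..R}"
    using assms by (intro fundamental_theorem_of_calculus)
      (auto simp: has_real_derivative_iff_has_vector_derivative)
  then show ?thesis
    by (simp add: algebra_simps)
qed

lemma nn_integral_complex_gaussian_cball:
  fixes \<nu> :: complex
  assumes \<sigma>: "0 < \<sigma>" and r: "0 \<le> r"
  shows "(\<integral>\<^sup>+z. ennreal (indicator (cball \<nu> r) z * (1 / (pi * \<sigma>\<^sup>2) * exp (- (cmod (z - \<nu>))\<^sup>2 / \<sigma>\<^sup>2))) \<partial>lborel)
     = ennreal (1 - exp (- r\<^sup>2 / \<sigma>\<^sup>2))"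
proof -
  let ?c = "ennreal (1 / (pi * \<sigma>\<^sup>2))" and ?g = "\<lambda>s. ennreal (exp (- s / \<sigma>\<^sup>2))"
  have [measurable]: "cball \<nu> r \<in> sets borel"
    by (simp add: borel_closed)
  have "(\<integral>\<^sup>+z. ennreal (indicator (cball \<nu> r) z * (1 / (pi * \<sigma>\<^sup>2) * exp (- (cmod (z - \<nu>))\<^sup>2 / \<sigma>\<^sup>2))) \<partial>lborel)
      = (\<integral>\<^sup>+z. ?c * (indicator (cball \<nu> r) z * ?g ((cmod (z - \<nu>))\<^sup>2)) \<partial>lborel)"
    using \<sigma> by (intro nn_integral_cong) (simp flip: ennreal_mult' split: split_indicator)
  also have "\<dots> = ?c * (\<integral>\<^sup>+z. ?g ((cmod (z - \<nu>))\<^sup>2) \<partial>density lborel (indicator (cball \<nu> r)))"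
    by (simp add: nn_integral_cmult nn_integral_density)
  also have "\<dots> = ?c * (\<integral>\<^sup>+s. ?g s \<partial>distr (density lborel (indicator (cball \<nu> r))) borel (\<lambda>z. (cmod (z - \<nu>))\<^sup>2))"
    by (subst nn_integral_distr) auto
  also have "\<dots> = ?c * (\<integral>\<^sup>+s. ennreal pi * (?g s * indicator {0..r\<^sup>2} s) \<partial>lborel)"
    by (simp add: distr_dist_sq_cball_complex r nn_integral_density mult_ac)
  also have "\<dots> = ?c * (ennreal pi * (\<integral>\<^sup>+s. ?g s * indicator {0..r\<^sup>2} s \<partial>lborel))"
    by (simp add: nn_integral_cmult)
  also have "(\<integral>\<^sup>+s. ?g s * indicator {0..r\<^sup>2} s \<partial>lborel) = ennreal (\<sigma>\<^sup>2 * (1 - exp (- r\<^sup>2 / \<sigma>\<^sup>2)))"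
    using \<sigma> by (intro nn_integral_has_integral_lebesgue' has_integral_exp_neg_div) auto
  finally show ?thesis
    using \<sigma> by (simp flip: ennreal_mult')
qed

lemma set_integral_awgn_density_le:
  fixes \<nu> :: "nat \<Rightarrow> complex"
  assumes \<sigma>: "0 < \<sigma>" and r: "0 \<le> r" and D: "D \<subseteq> PiE {..<n} (\<lambda>m. cball (\<nu> m) r)"
  shows "(LINT y:D|cn_measure n. awgn_density \<sigma> n y \<nu>) \<le> (1 - exp (- r\<^sup>2 / \<sigma>\<^sup>2)) ^ n"
proof -
  let ?g = "\<lambda>m z. indicator (cball (\<nu> m) r) z * (1 / (pi * \<sigma>\<^sup>2) * exp (- (cmod (z - \<nu> m))\<^sup>2 / \<sigma>\<^sup>2))"
  have [measurable]: "cball (\<nu> m) r \<in> sets borel" for m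
    by (simp add: borel_closed)
  have "indicator D y * awgn_density \<sigma> n y \<nu> \<le> (\<Prod>m<n. ?g m (y m))" for y
  proof (cases "y \<in> D")
    case True
    then have "\<forall>m<n. y m \<in> cball (\<nu> m) r"
      using D by (auto simp: PiE_iff)
    then show ?thesis
      using True unfolding awgn_density_def by (intro eq_refl prod.cong) auto
  qed (auto intro!: prod_nonneg)
  then have "(\<integral>\<^sup>+y. ennreal (indicator D y *\<^sub>R awgn_density \<sigma> n y \<nu>) \<partial>cn_measure n)
       \<le> (\<integral>\<^sup>+y. (\<Prod>m<n. ennreal (?g m (y m))) \<partial>cn_measure n)"
    by (intro nn_integral_mono) (simp add: prod_ennreal ennreal_leI)
  also have "\<dots> = (\<Prod>m<n. \<integral>\<^sup>+z. ennreal (?g m z) \<partial>lborel)"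
    unfolding cn_measure_def
    by (intro product_sigma_finite.product_nn_integral_prod)
      (auto simp: product_sigma_finite_def lborel.sigma_finite_measure_axioms)
  also have "\<dots> = (\<Prod>m<n. ennreal (1 - exp (- r\<^sup>2 / \<sigma>\<^sup>2)))"
    using \<sigma> r by (intro prod.cong refl nn_integral_complex_gaussian_cball)
  also have "\<dots> = ennreal ((1 - exp (- r\<^sup>2 / \<sigma>\<^sup>2)) ^ n)"
    by (simp add: ennreal_power)
  finally show ?thesis
    unfolding set_lebesgue_integral_def by (intro integral_real_bounded) auto
qed

lemma decoding_region_subset_balls:
  assumes family: "in_family n M u D C A L \<alpha> p rad"
    and rad: "\<forall>c\<in>{1..C}. rad c \<le> r" and i: "i \<in> {1..M}"
  shows "D i \<subseteq> PiE {..<n} (\<lambda>m. cball (u i m) r)"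
proof
  fix y assume y: "y \<in> D i"
  have D_i: "D i = PiE {..<n} (\<lambda>m. {z. \<forall>c\<in>{1..C}. \<forall>l<L c.
      u i m = layer_point A L \<alpha> c l \<longrightarrow> cmod (z - layer_point A L \<alpha> c l) \<le> rad c})"
    using family i by (simp add: in_family_def)
  have "y m \<in> cball (u i m) r" if m: "m < n" for m
  proof -
    have "u i m \<in> constellation C A L \<alpha>"
      using family i m by (simp add: in_family_def)
    then obtain c l where c: "c \<in> {1..C}" "l < L c" "u i m = layer_point A L \<alpha> c l"
      unfolding constellation_def by blast
    then have "cmod (y m - u i m) \<le> rad c"
      using y m unfolding D_i by (auto simp: PiE_iff)
    moreover have "rad c \<le> r"
      using c rad by blast
    ultimately show ?thesis
      by (simp add: dist_norm norm_minus_commute)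
  qed
  then show "y \<in> PiE {..<n} (\<lambda>m. cball (u i m) r)"
    using y unfolding D_i by (auto simp: PiE_iff)
qed

lemma avg_error_ge:
  assumes "0 < M"
    and "\<And>i. i \<in> {1..M} \<Longrightarrow> (LINT y:D i|cn_measure n. awgn_density \<sigma> n y (u i)) \<le> P"
  shows "1 - P \<le> avg_error \<sigma> n M u D"
proof -
  have "1 - P = (1 / real M) * (\<Sum>i\<in>{1..M}. 1 - P)"
    using assms(1) by simp
  also have "\<dots> \<le> avg_error \<sigma> n M u D"
    unfolding avg_error_def using assms by (intro mult_left_mono sum_mono) auto
  finally show ?thesis .
qed

lemma gaussian_radius_lower_bound:
  fixes \<sigma> \<epsilon> r :: real
  assumes \<sigma>: "0 < \<sigma>" and \<epsilon>: "\<epsilon> < 1" and r: "0 \<le> r"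
    and success: "1 - \<epsilon> \<le> (1 - exp (- r\<^sup>2 / \<sigma>\<^sup>2)) ^ n"
  shows "sqrt (\<sigma>\<^sup>2 * ln (1 / (1 - (1 - \<epsilon>) powr (1 / real n)))) \<le> r"
proof (cases "n = 0")
  case True
  \<comment> \<open>\<open>(1 - \<epsilon>) powr 0 = 1\<close>, \<open>1 / 0 = 0\<close> and \<open>ln 0 = 0\<close>, so the bound is \<open>0\<close>\<close>
  then show ?thesis using \<epsilon> r by simp
next
  case False
  define q where "q = 1 - exp (- r\<^sup>2 / \<sigma>\<^sup>2)"
  have "q \<noteq> 0"
    using success[folded q_def] \<epsilon> False by (auto simp: zero_power)
  then have "0 < q"
    unfolding q_def by (simp add: less_le)
  have "(1 - \<epsilon>) powr (1 / real n) \<le> (q ^ n) powr (1 / real n)"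
    using success \<epsilon> unfolding q_def by (intro powr_mono2) auto
  also have "\<dots> = q"
    using False \<open>0 < q\<close> by (simp add: root_powr_inverse[symmetric] real_root_power_cancel)
  finally have t: "exp (- r\<^sup>2 / \<sigma>\<^sup>2) \<le> 1 - (1 - \<epsilon>) powr (1 / real n)"
    unfolding q_def by simp
  have "ln (1 / (1 - (1 - \<epsilon>) powr (1 / real n))) = - ln (1 - (1 - \<epsilon>) powr (1 / real n))"
    using t by (subst ln_div) auto
  also have "\<dots> \<le> - ln (exp (- r\<^sup>2 / \<sigma>\<^sup>2))"
    using t by (subst neg_le_iff_le) (intro ln_mono, auto)
  also have "\<dots> = r\<^sup>2 / \<sigma>\<^sup>2"
    by simp
  finally have "\<sigma>\<^sup>2 * ln (1 / (1 - (1 - \<epsilon>) powr (1 / real n))) \<le> r\<^sup>2"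
    using \<sigma> by (simp add: field_simps)
  then show ?thesis
    using r real_le_lsqrt by blast
qed

theorem lemma10:
  fixes n M C :: nat and \<sigma> k1 k2 \<epsilon> B \<delta> r :: real
    and A \<alpha> p rad :: "nat \<Rightarrow> real" and L :: "nat \<Rightarrow> nat"
    and u :: "nat \<Rightarrow> nat \<Rightarrow> complex" and D :: "nat \<Rightarrow> (nat \<Rightarrow> complex) set"
  assumes "\<sigma> > 0" and "k1 > 0" and "k2 > 0" and "0 < \<epsilon>" and "\<epsilon> < 1"
    and "is_code_full \<sigma> k1 k2 n M (constellation C A L \<alpha>) \<epsilon> B \<delta> u D"
    and "in_family n M u D C A L \<alpha> p rad"
    and "\<forall>c\<in>{1..C}. rad c = r"
  shows "r \<ge> sqrt (\<sigma>\<^sup>2 * ln (1 / (1 - (1 - \<epsilon>) powr (1 / real n))))"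
proof -
  have "0 < M" and error: "avg_error \<sigma> n M u D \<le> \<epsilon>"
    using assms(6) by (auto simp: is_code_full_def is_code_def)
  have "(\<Sum>c\<in>{1..C}. p c) = 1"
    using assms(7) by (simp add: in_family_def)
  then have "{1..C} \<noteq> {}"
    by (metis sum.empty zero_neq_one)
  then have "0 < r"
    using assms(7,8) by (auto simp: in_family_def)
  have "(LINT y:D i|cn_measure n. awgn_density \<sigma> n y (u i)) \<le> (1 - exp (- r\<^sup>2 / \<sigma>\<^sup>2)) ^ n"
    if "i \<in> {1..M}" for i
    using set_integral_awgn_density_le[OF assms(1) _ decoding_region_subset_balls[OF assms(7) _ that]]
      assms(8) \<open>0 < r\<close> by simp
  then have "1 - (1 - exp (- r\<^sup>2 / \<sigma>\<^sup>2)) ^ n \<le> avg_error \<sigma> n M u D"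
    by (rule avg_error_ge[OF \<open>0 < M\<close>])
  then have "1 - \<epsilon> \<le> (1 - exp (- r\<^sup>2 / \<sigma>\<^sup>2)) ^ n"
    using error by linarith
  then show ?thesis
    by (rule gaussian_radius_lower_bound[OF assms(1,5) less_imp_le[OF \<open>0 < r\<close>]])
qed

end
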